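(* Let $\mathbf{X}\in\mathbb{R}^{n\times p}$ with $n>p$ have full column rank, let $\mathbf{D}\in\mathbb{R}^{m\times p}$ ($m<p$) have full row rank, let $\mathbf{E}\in\mathbb{R}^{(p-m)\times p}$ be such that $\tilde{\mathbf{D}}=[\mathbf{D}^\top,\mathbf{E}^\top]^\top$ is invertible, and write $\tilde{\mathbf{D}}^{-1}=[\mathbf{Z},\mathbf{F}]$ with $\mathbf{Z}\in\mathbb{R}^{p\times m}$, $\mathbf{F}\in\mathbb{R}^{p\times(p-m)}$. Let $\mathbf{M}=\mathbf{I}_n-\mathbf{X}\mathbf{F}[(\mathbf{X}\mathbf{F})^\top\mathbf{X}\mathbf{F}]^{-1}(\mathbf{X}\mathbf{F})^\top$ and $\mathbf{X}^*=\mathbf{M}\mathbf{X}\mathbf{Z}$. Then $\mathbf{X}^*$ has full column rank $m$, and hence $\boldsymbol\Sigma^*=\mathbf{X}^{*\top}\mathbf{X}^*$ is invertible. *)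

theory Defs
  imports "HOL-Analysis.Analysis"
begin

definition stack_rows :: "real^'p^'m::finite \<Rightarrow> real^'p^'k::finite \<Rightarrow> real^'p^('m + 'k)" where
  "stack_rows D E = (\<chi> i. case i of Inl a \<Rightarrow> D $ a | Inr b \<Rightarrow> E $ b)"

definition left_cols :: "real^('m::finite + 'k::finite)^'p \<Rightarrow> real^'m^'p" where
  "left_cols A = (\<chi> i j. A $ i $ Inl j)"

definition right_cols :: "real^('m::finite + 'k::finite)^'p \<Rightarrow> real^'k^'p" where
  "right_cols A = (\<chi> i j. A $ i $ Inr j)"

end

theory Submission
  imports Defs
begin

text \<open>
  The annihilator \<open>M = I - B C B\<^sup>T\<close> with \<open>B = X F\<close> can only kill vectors in the
  column space of \<open>X F\<close>, whatever \<open>C\<close> is. So if \<open>M X Z v = 0\<close> then \<open>X Z v = X F w\<close> for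
  some \<open>w\<close>; injectivity of \<open>X\<close> gives \<open>Z v = F w\<close>, i.e. \<open>[Z, F] (v, -w) = 0\<close>, and since
  \<open>[Z, F]\<close> is invertible, \<open>v = 0\<close>. Thus \<open>X\<^sup>* = M X Z\<close> is injective, which is full column
  rank, and the Gram matrix of an injective matrix is invertible.
\<close>

lemma matrix_inv:
  fixes A :: "'a::semiring_1^'n^'m"
  assumes "invertible A"
  shows "A ** matrix_inv A = mat 1" and "matrix_inv A ** A = mat 1"
  using someI_ex[OF assms[unfolded invertible_def]] by (simp_all add: matrix_inv_def)

lemma invertible_matrix_inv:
  fixes A :: "'a::semiring_1^'n^'m"
  assumes "invertible A"
  shows "invertible (matrix_inv A)"
  using matrix_inv[OF assms] invertible_def by blast

lemma inj_matrix_vector_mult_iff: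
  fixes A :: "'a::field^'n^'m"
  shows "inj ((*v) A) \<longleftrightarrow> (\<forall>x. A *v x = 0 \<longrightarrow> x = 0)"
  by (simp add: matrix_left_invertible_injective[symmetric] matrix_left_invertible_ker)

lemma invertible_transpose_mult_self:
  fixes A :: "real^'m^'n"
  assumes "inj ((*v) A)"
  shows "invertible (transpose A ** A)"
proof -
  have "x = 0" if "(transpose A ** A) *v x = 0" for x
  proof -
    have "inner (A *v x) (A *v x) = inner (x v* transpose A) (A *v x)"
      by (simp flip: transpose_matrix_vector)
    also have "\<dots> = inner x ((transpose A ** A) *v x)"
      by (simp only: dot_lmul_matrix matrix_vector_mul_assoc)
    also have "\<dots> = 0"
      using that by simp
    finally have "A *v x = 0" by simp
    with assms show "x = 0" by (simp add: inj_matrix_vector_mult_iff)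
  qed
  then show ?thesis
    by (simp add: invertible_left_inverse matrix_left_invertible_ker)
qed

lemma matrix_vector_mult_split_cols:
  fixes W :: "real^('m::finite + 'k::finite)^'p"
  shows "W *v x = left_cols W *v (\<chi> j. x $ Inl j) + right_cols W *v (\<chi> j. x $ Inr j)"
proof -
  have "(\<Sum>c\<in>UNIV. W $ i $ c * x $ c) =
     (\<Sum>j\<in>UNIV. W $ i $ Inl j * x $ Inl j) + (\<Sum>j\<in>UNIV. W $ i $ Inr j * x $ Inr j)" for i
    by (subst UNIV_sum, subst sum.union_disjoint) (auto simp: sum.reindex)
  then show ?thesis
    by (simp add: vec_eq_iff matrix_vector_mult_def left_cols_def right_cols_def)
qed

lemma left_cols_eq_right_cols_imp_zero:
  fixes W :: "real^('m::finite + 'k::finite)^'p"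
  assumes "inj ((*v) W)" and "left_cols W *v v = right_cols W *v w"
  shows "v = 0"
proof -
  define x :: "real^('m + 'k)" where "x = (\<chi> c. case c of Inl j \<Rightarrow> v $ j | Inr j \<Rightarrow> - w $ j)"
  have "W *v x = left_cols W *v v - right_cols W *v w"
    by (simp add: matrix_vector_mult_split_cols x_def vec_eq_iff matrix_vector_mult_def sum_negf)
  with assms have "x = 0"
    by (simp add: inj_matrix_vector_mult_iff)
  then have "x $ Inl j = 0" for j
    by simp
  then show "v = 0"
    by (simp add: vec_eq_iff x_def)
qed

lemma residual_kernel_subset_range:
  fixes B :: "'a::comm_ring_1^'k^'n" and C :: "'a^'k^'k"
  assumes "(mat 1 - B ** C ** transpose B) *v y = 0"
  shows "y = B *v (C *v (transpose B *v y))"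
  using assms
  by (simp add: matrix_vector_mult_diff_rdistrib matrix_vector_mul_assoc matrix_mul_assoc
    del: transpose_matrix_vector)

lemma inj_residual_mult_left_cols:
  fixes X :: "real^'p^'n" and W :: "real^('m::finite + 'k::finite)^'p" and C :: "real^'k^'k"
  defines "B \<equiv> X ** right_cols W"
  assumes "inj ((*v) X)" and "inj ((*v) W)"
  shows "inj ((*v) ((mat 1 - B ** C ** transpose B) ** X ** left_cols W))"
  unfolding inj_matrix_vector_mult_iff
proof (intro allI impI)
  fix v
  assume "((mat 1 - B ** C ** transpose B) ** X ** left_cols W) *v v = 0"
  then have "X *v (left_cols W *v v) = B *v (C *v (transpose B *v (X *v (left_cols W *v v))))"
    by (intro residual_kernel_subset_range) (simp add: matrix_vector_mul_assoc matrix_mul_assoc)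
  also have "\<dots> = X *v (right_cols W *v (C *v (transpose B *v (X *v (left_cols W *v v)))))"
    by (simp add: B_def matrix_vector_mul_assoc matrix_mul_assoc)
  finally have "left_cols W *v v = right_cols W *v (C *v (transpose B *v (X *v (left_cols W *v v))))"
    using assms(2) by (simp add: inj_eq)
  with assms(3) show "v = 0"
    by (rule left_cols_eq_right_cols_imp_zero)
qed

theorem mainTheorem12:
  fixes X :: "real^'p^'n" and D :: "real^'p^'m" and E :: "real^'p^'k"
  assumes "CARD('p) < CARD('n)"
    and "rank X = CARD('p)"
    and "CARD('m) < CARD('p)"
    and "rank D = CARD('m)"
    and "CARD('k) = CARD('p) - CARD('m)"
    and "invertible (stack_rows D E)"
  shows "rank (let Z = left_cols (matrix_inv (stack_rows D E));
                   F = right_cols (matrix_inv (stack_rows D E));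
                   M = mat 1 - (X ** F) ** matrix_inv (transpose (X ** F) ** (X ** F)) ** transpose (X ** F)
               in M ** X ** Z) = CARD('m)
       \<and> invertible (let Z = left_cols (matrix_inv (stack_rows D E));
                   F = right_cols (matrix_inv (stack_rows D E));
                   M = mat 1 - (X ** F) ** matrix_inv (transpose (X ** F) ** (X ** F)) ** transpose (X ** F);
                   Xs = M ** X ** Z
               in transpose Xs ** Xs)"
proof -
  \<comment> \<open>Only the full column rank of \<open>X\<close> and the invertibility of \<open>[D; E]\<close> are needed.\<close>
  define W where "W = matrix_inv (stack_rows D E)"
  define B where "B = X ** right_cols W"
  define Xs where "Xs = (mat 1 - B ** matrix_inv (transpose B ** B) ** transpose B) ** X ** left_cols W"
  have "inj ((*v) X)"
    using assms(2) full_rank_injective by blast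
  moreover have "inj ((*v) W)"
    unfolding W_def using assms(6) by (intro inj_matrix_vector_mult invertible_matrix_inv)
  ultimately have "inj ((*v) Xs)"
    unfolding Xs_def B_def by (rule inj_residual_mult_left_cols)
  then have "rank Xs = CARD('m)" and "invertible (transpose Xs ** Xs)"
    by (simp_all add: full_rank_injective invertible_transpose_mult_self)
  then show ?thesis
    by (simp add: Let_def Xs_def B_def W_def)
qed

end
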